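(* Let $S$ be a solid and let $x,y\in S^*$. If $R(x)\le R(y)$, then $e(x)y\le e(y)x$.
   Context: A solid is a set $S$ with two binary operations $+$ and $\cdot$ (written $xy$) and a binary relation $\le$ satisfying the following axioms (all variables range over $S$). (A1) $+$ is associative and commutative. (A2) For each $x$ there is $e$ with $x+e=x$ such that $e+f=e$ for every $f$ with $x+f=x$; this $e$ is unique and is denoted $e(x)$ (the magnitude of $x$). An element $x$ with $x=e(x)$ is called a magnitude. (A3) For each $x$ there is $s$ with $x+s=e(x)$ and $e(s)=e(x)$; it is unique and denoted $-x$; write $x-y$ for $x+(-y)$. (A4) $e(x+y)=e(x)$ or $e(x+y)=e(y)$. (M1) $\cdot$ is associative and commutative. (M2) For each $x\neq e(x)$ there is $u$ with $xu=x$ such that $uv=u$ for every $v$ with $xv=x$; it is unique and denoted $u(x)$. (M3) For each $x\ne e(x)$ there is $d$ with $xd=u(x)$ and $u(d)=u(x)$; it is unique and denoted $x^{-1}$; write $y/x$ for $yx^{-1}$. (M4) If $x\neq e(x)$ and $y\ne e(y)$ then $u(xy)=u(x)$ or $u(xy)=u(y)$. (O1) $\le$ is a total order (reflexive, antisymmetric, transitive, total); $x<y$ means $x\le y$ and $x\ne y$. (O2) $x\le y\Rightarrow x+z\le y+z$. (O3) $y+e(x)=e(x)\Rightarrow (y\le e(x)$ and $-y\le e(x))$. (O4) $(e(x)<x$ and $y\le z)\Rightarrow xy\le xz$. (O5) $e(y)\le y\le z\Rightarrow e(x)y\le e(x)z$. (AM1) For all $x,y$ there is $z$ with $e(x)y=e(z)$.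 (AM2) $e(xy)=e(x)y+e(y)x$. (AM3) If $x\ne e(x)$ then $e(u(x))=e(x)/x$. (AM4) (distributivity axiom) $xy+xz=x(y+z)+e(x)y+e(x)z$. (AM5) $-(xy)=(-x)y$. (E1) There is $m$ with $m+x=x$ for all $x$; it is unique, called zero and denoted $0$. (E2) There is $u$ with $ux=x$ for all $x$; it is unique, called one and denoted $1$. (E3) There is $M$ with $e(x)+M=M$ for all $x$. (E4) There is $x$ with $e(x)\ne 0$ and $e(x)\ne M$. (E5) For every $x$ there is $a$ with $x=a+e(x)$ and $e(a)=0$. (E6) If $x,y$ are magnitudes with $x<y$, there is $z$ with $z\ne e(z)$ and $x<z<y$. Further notation: $S^*=\{x\in S: x\ne e(x)\}$ (zeroless elements). $x$ is positive if $e(x)\le x$ and negative if $x<e(x)$; $|x|=x$ if $x$ is positive and $|x|=-x$ if $x$ is negative. $x$ is precise if $e(x)=0$. The relative uncertainty $R(x)$ is $e(u(x))$ if $x\ne e(x)$, and $M$ (from (E3)) if $x=e(x)$. *)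

theory Defs
  imports Main
begin

definition mag :: "('a \<Rightarrow> 'a \<Rightarrow> 'a) \<Rightarrow> 'a \<Rightarrow> 'a" where
  "mag add x = (THE e. add x e = x \<and> (\<forall>f. add x f = x \<longrightarrow> add e f = e))"

definition opp :: "('a \<Rightarrow> 'a \<Rightarrow> 'a) \<Rightarrow> 'a \<Rightarrow> 'a" where
  "opp add x = (THE s. add x s = mag add x \<and> mag add s = mag add x)"

definition unity :: "('a \<Rightarrow> 'a \<Rightarrow> 'a) \<Rightarrow> 'a \<Rightarrow> 'a" where
  "unity mul x = (THE u. mul x u = x \<and> (\<forall>v. mul x v = x \<longrightarrow> mul u v = u))"

definition sinv :: "('a \<Rightarrow> 'a \<Rightarrow> 'a) \<Rightarrow> 'a \<Rightarrow> 'a" where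
  "sinv mul x = (THE d. mul x d = unity mul x \<and> unity mul d = unity mul x)"

definition bigM :: "('a \<Rightarrow> 'a \<Rightarrow> 'a) \<Rightarrow> 'a" where
  "bigM add = (SOME M. \<forall>x. add (mag add x) M = M)"

definition szero :: "('a \<Rightarrow> 'a \<Rightarrow> 'a) \<Rightarrow> 'a" where
  "szero add = (THE m. \<forall>x. add m x = x)"

definition relunc :: "('a \<Rightarrow> 'a \<Rightarrow> 'a) \<Rightarrow> ('a \<Rightarrow> 'a \<Rightarrow> 'a) \<Rightarrow> 'a \<Rightarrow> 'a" where
  "relunc add mul x = (if x \<noteq> mag add x then mag add (unity mul x) else bigM add)"

definition solid :: "('a \<Rightarrow> 'a \<Rightarrow> 'a) \<Rightarrow> ('a \<Rightarrow> 'a \<Rightarrow> 'a) \<Rightarrow> ('a \<Rightarrow> 'a \<Rightarrow> bool) \<Rightarrow> bool" where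
  "solid add mul le \<longleftrightarrow>
    \<comment> \<open>(A1)\<close>
    (\<forall>x y z. add (add x y) z = add x (add y z)) \<and> (\<forall>x y. add x y = add y x) \<and>
    \<comment> \<open>(A2)\<close>
    (\<forall>x. \<exists>e. add x e = x \<and> (\<forall>f. add x f = x \<longrightarrow> add e f = e)) \<and>
    \<comment> \<open>(A3)\<close>
    (\<forall>x. \<exists>!s. add x s = mag add x \<and> mag add s = mag add x) \<and>
    \<comment> \<open>(A4)\<close>
    (\<forall>x y. mag add (add x y) = mag add x \<or> mag add (add x y) = mag add y) \<and>
    \<comment> \<open>(M1)\<close>
    (\<forall>x y z. mul (mul x y) z = mul x (mul y z)) \<and> (\<forall>x y. mul x y = mul y x) \<and>
    \<comment> \<open>(M2)\<close>
    (\<forall>x. x \<noteq> mag add x \<longrightarrow> (\<exists>u. mul x u = x \<and> (\<forall>v. mul x v = x \<longrightarrow> mul u v = u))) \<and>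
    \<comment> \<open>(M3)\<close>
    (\<forall>x. x \<noteq> mag add x \<longrightarrow> (\<exists>!d. mul x d = unity mul x \<and> unity mul d = unity mul x)) \<and>
    \<comment> \<open>(M4)\<close>
    (\<forall>x y. x \<noteq> mag add x \<longrightarrow> y \<noteq> mag add y \<longrightarrow>
        unity mul (mul x y) = unity mul x \<or> unity mul (mul x y) = unity mul y) \<and>
    \<comment> \<open>(O1)\<close>
    (\<forall>x. le x x) \<and> (\<forall>x y. le x y \<longrightarrow> le y x \<longrightarrow> x = y) \<and>
    (\<forall>x y z. le x y \<longrightarrow> le y z \<longrightarrow> le x z) \<and> (\<forall>x y. le x y \<or> le y x) \<and>
    \<comment> \<open>(O2)\<close>
    (\<forall>x y z. le x y \<longrightarrow> le (add x z) (add y z)) \<and>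
    \<comment> \<open>(O3)\<close>
    (\<forall>x y. add y (mag add x) = mag add x \<longrightarrow> le y (mag add x) \<and> le (opp add y) (mag add x)) \<and>
    \<comment> \<open>(O4)\<close>
    (\<forall>x y z. (le (mag add x) x \<and> mag add x \<noteq> x \<and> le y z) \<longrightarrow> le (mul x y) (mul x z)) \<and>
    \<comment> \<open>(O5)\<close>
    (\<forall>x y z. le (mag add y) y \<and> le y z \<longrightarrow> le (mul (mag add x) y) (mul (mag add x) z)) \<and>
    \<comment> \<open>(AM1)\<close>
    (\<forall>x y. \<exists>z. mul (mag add x) y = mag add z) \<and>
    \<comment> \<open>(AM2)\<close>
    (\<forall>x y. mag add (mul x y) = add (mul (mag add x) y) (mul (mag add y) x)) \<and>
    \<comment> \<open>(AM3)\<close>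
    (\<forall>x. x \<noteq> mag add x \<longrightarrow> mag add (unity mul x) = mul (mag add x) (sinv mul x)) \<and>
    \<comment> \<open>(AM4)\<close>
    (\<forall>x y z. add (mul x y) (mul x z) =
        add (add (mul x (add y z)) (mul (mag add x) y)) (mul (mag add x) z)) \<and>
    \<comment> \<open>(AM5)\<close>
    (\<forall>x y. opp add (mul x y) = mul (opp add x) y) \<and>
    \<comment> \<open>(E1)\<close>
    (\<exists>m. \<forall>x. add m x = x) \<and>
    \<comment> \<open>(E2)\<close>
    (\<exists>u. \<forall>x. mul u x = x) \<and>
    \<comment> \<open>(E3)\<close>
    (\<exists>M. \<forall>x. add (mag add x) M = M) \<and>
    \<comment> \<open>(E4)\<close>
    (\<exists>x. mag add x \<noteq> szero add \<and> mag add x \<noteq> bigM add) \<and>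
    \<comment> \<open>(E5)\<close>
    (\<forall>x. \<exists>a. x = add a (mag add x) \<and> mag add a = szero add) \<and>
    \<comment> \<open>(E6)\<close>
    (\<forall>x y. x = mag add x \<longrightarrow> y = mag add y \<longrightarrow> le x y \<longrightarrow> x \<noteq> y \<longrightarrow>
        (\<exists>z. z \<noteq> mag add z \<and> le x z \<and> x \<noteq> z \<and> le z y \<and> z \<noteq> y))"

end

theory Submission
  imports Defs
begin

text \<open>The relative uncertainty is exactly the factor that turns a zeroless element into its
  magnitude: \<open>x R(x) = e(x)\<close>, by (AM2), (AM3) and the idempotence of magnitudes under addition.
  Multiplication by a zeroless element is monotone on magnitudes: by (O4) for positive elements,
  and for negative ones because \<open>-m = m\<close> for every magnitude \<open>m\<close>, so \<open>(-p) m = p m\<close>.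
  Hence \<open>e(x) = x R(x) \<le> x R(y)\<close>, and multiplying by \<open>y\<close> gives
  \<open>y e(x) \<le> x (y R(y)) = x e(y)\<close>.\<close>

lemma absorbing_neutral_ex1:
  assumes comm: "\<And>a b. f a b = f b a"
    and ex: "\<exists>e. f x e = x \<and> (\<forall>g. f x g = x \<longrightarrow> f e g = e)"
  shows "\<exists>!e. f x e = x \<and> (\<forall>g. f x g = x \<longrightarrow> f e g = e)"
proof -
  obtain e where e: "f x e = x \<and> (\<forall>g. f x g = x \<longrightarrow> f e g = e)"
    using ex by blast
  show ?thesis
  proof (rule ex1I[of _ e])
    fix e' assume e': "f x e' = x \<and> (\<forall>g. f x g = x \<longrightarrow> f e' g = e')"
    have "e' = f e' e" using e e' by simp
    also have "\<dots> = f e e'" by (rule comm)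
    also have "\<dots> = e" using e e' by simp
    finally show "e' = e" .
  qed (use e in blast)
qed

locale solid_structure =
  fixes add mul :: "'a \<Rightarrow> 'a \<Rightarrow> 'a" and le :: "'a \<Rightarrow> 'a \<Rightarrow> bool"
  assumes solid: "solid add mul le"
begin

lemma add_commute [rule_format]: "\<forall>x y. add x y = add y x"
  using solid unfolding solid_def by (elim conjE) assumption

lemma mul_commute [rule_format]: "\<forall>x y. mul x y = mul y x"
  using solid unfolding solid_def by (elim conjE) assumption

lemma mul_assoc [rule_format]: "\<forall>x y z. mul (mul x y) z = mul x (mul y z)"
  using solid unfolding solid_def by (elim conjE) assumption

lemma le_total [rule_format]: "\<forall>x y. le x y \<or> le y x"
  using solid unfolding solid_def by (elim conjE) assumption

lemma add_right_mono [rule_format]: "\<forall>x y z. le x y \<longrightarrow> le (add x z) (add y z)"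
  using solid unfolding solid_def by (elim conjE) assumption

lemma mul_left_mono_positive:
  assumes "le (mag add p) p" and "mag add p \<noteq> p" and "le y z"
  shows "le (mul p y) (mul p z)"
proof -
  have "\<forall>x y z. le (mag add x) x \<and> mag add x \<noteq> x \<and> le y z \<longrightarrow> le (mul x y) (mul x z)"
    using solid unfolding solid_def by (elim conjE) assumption
  with assms show ?thesis by blast
qed

lemma mul_mag_eq_mag_ex [rule_format]: "\<forall>x y. \<exists>z. mul (mag add x) y = mag add z"
  using solid unfolding solid_def by (elim conjE) assumption

lemma mag_mul [rule_format]: "\<forall>x y. mag add (mul x y) = add (mul (mag add x) y) (mul (mag add y) x)"
  using solid unfolding solid_def by (elim conjE) assumption

lemma mag_unity [rule_format]: "\<forall>x. x \<noteq> mag add x \<longrightarrow> mag add (unity mul x) = mul (mag add x) (sinv mul x)"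
  using solid unfolding solid_def by (elim conjE) assumption

lemma opp_mul [rule_format]: "\<forall>x y. opp add (mul x y) = mul (opp add x) y"
  using solid unfolding solid_def by (elim conjE) assumption

lemma absorbing_add_neutral_ex [rule_format]:
  "\<forall>x. \<exists>e. add x e = x \<and> (\<forall>f. add x f = x \<longrightarrow> add e f = e)"
  using solid unfolding solid_def by (elim conjE) assumption

lemma opp_ex1 [rule_format]:
  "\<forall>x. \<exists>!s. add x s = mag add x \<and> mag add s = mag add x"
  using solid unfolding solid_def by (elim conjE) assumption

lemma absorbing_mul_neutral_ex [rule_format]:
  "\<forall>x. x \<noteq> mag add x \<longrightarrow> (\<exists>u. mul x u = x \<and> (\<forall>v. mul x v = x \<longrightarrow> mul u v = u))"
  using solid unfolding solid_def by (elim conjE) assumption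

lemma sinv_ex1 [rule_format]:
  "\<forall>x. x \<noteq> mag add x \<longrightarrow> (\<exists>!d. mul x d = unity mul x \<and> unity mul d = unity mul x)"
  using solid unfolding solid_def by (elim conjE) assumption

lemma add_mag: "add x (mag add x) = x"
  and add_mag_absorb: "add x f = x \<Longrightarrow> add (mag add x) f = mag add x"
proof -
  from theI'[OF absorbing_neutral_ex1[OF add_commute absorbing_add_neutral_ex]]
  show "add x (mag add x) = x" "add x f = x \<Longrightarrow> add (mag add x) f = mag add x"
    unfolding mag_def by blast+
qed

lemma add_mag_self: "add (mag add x) (mag add x) = mag add x"
  by (rule add_mag_absorb[OF add_mag])

lemma mag_mag: "mag add (mag add x) = mag add x"
proof -
  have "mag add (mag add x) = add (mag add (mag add x)) (mag add x)"
    using add_mag_absorb[OF add_mag_self] by simp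
  also have "\<dots> = mag add x"
    using add_mag[of "mag add x"] add_commute by simp
  finally show ?thesis .
qed

lemma add_opp: "add x (opp add x) = mag add x"
  and mag_opp: "mag add (opp add x) = mag add x"
proof -
  from theI'[OF opp_ex1] show "add x (opp add x) = mag add x" "mag add (opp add x) = mag add x"
    unfolding opp_def by blast+
qed

lemma opp_mag: "opp add (mag add m) = mag add m"
proof -
  have "add (mag add m) (mag add m) = mag add (mag add m) \<and>
      mag add (mag add m) = mag add (mag add m)"
    using add_mag_self mag_mag by simp
  then show ?thesis
    unfolding opp_def by (rule the1_equality[OF opp_ex1])
qed

lemma mul_mag_is_mag: "mag add (mul (mag add a) b) = mul (mag add a) b"
  using mul_mag_eq_mag_ex[of a b] mag_mag by metis

lemma opp_mul_mag: "mul (opp add p) (mag add a) = mul p (mag add a)"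
proof -
  have "mul (opp add p) (mag add a) = opp add (mul p (mag add a))"
    by (rule opp_mul[symmetric])
  also have "\<dots> = mul p (mag add a)"
    using opp_mag[of "mul (mag add a) p"] mul_mag_is_mag[of a p] mul_commute[of p] by simp
  finally show ?thesis .
qed

lemma positive_or_opp_positive:
  assumes "p \<noteq> mag add p"
  obtains q where "q = p \<or> q = opp add p" and "le (mag add q) q" and "mag add q \<noteq> q"
proof (cases "le (mag add p) p")
  case True
  then show ?thesis using assms that by metis
next
  case False
  then have "le p (mag add p)" using le_total by blast
  then have "le (add p (opp add p)) (add (mag add p) (opp add p))"
    by (rule add_right_mono)
  moreover have "add (mag add p) (opp add p) = opp add p"
    using add_mag[of "opp add p"] mag_opp add_commute by metis
  ultimately have "le (mag add (opp add p)) (opp add p)"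
    using add_opp mag_opp by simp
  moreover have "mag add (opp add p) \<noteq> opp add p"
    using add_mag[of p] add_opp[of p] mag_opp[of p] assms by metis
  ultimately show ?thesis using that by blast
qed

lemma mul_left_mono_mag:
  assumes "p \<noteq> mag add p" and "le (mag add a) (mag add b)"
  shows "le (mul p (mag add a)) (mul p (mag add b))"
proof -
  obtain q where q: "q = p \<or> q = opp add p" "le (mag add q) q" "mag add q \<noteq> q"
    using positive_or_opp_positive[OF assms(1)] by blast
  have "le (mul q (mag add a)) (mul q (mag add b))"
    using mul_left_mono_positive[OF q(2,3) assms(2)] .
  then show ?thesis using q(1) opp_mul_mag by metis
qed

lemma mul_unity:
  assumes "x \<noteq> mag add x"
  shows "mul x (unity mul x) = x"
proof -
  from theI'[OF absorbing_neutral_ex1[OF mul_commute absorbing_mul_neutral_ex[OF assms]]]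
  show ?thesis
    unfolding unity_def by blast
qed

lemma mul_sinv:
  assumes "x \<noteq> mag add x"
  shows "mul x (sinv mul x) = unity mul x"
proof -
  from theI'[OF sinv_ex1[OF assms]] show ?thesis
    unfolding sinv_def by blast
qed

lemma mul_relunc:
  assumes x: "x \<noteq> mag add x"
  shows "mul x (relunc add mul x) = mag add x"
proof -
  let ?u = "unity mul x" and ?e = "mag add x"
  have R: "relunc add mul x = mul ?e (sinv mul x)"
    using x mag_unity unfolding relunc_def by simp
  then have Rx: "mul (mag add ?u) x = mul ?e ?u"
    using mag_unity[OF x] mul_sinv[OF x] mul_assoc mul_commute by metis
  have "?e = add (mul ?e ?u) (mul ?e ?u)"
    using mag_mul[of x ?u] mul_unity[OF x] Rx by simp
  then have "mul ?e ?u = ?e"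
    using add_mag_self mul_mag_eq_mag_ex[of x ?u] by metis
  then show ?thesis
    using R mul_sinv[OF x] mul_assoc mul_commute by metis
qed

lemma mag_mul_le_of_relunc_le:
  assumes x: "x \<noteq> mag add x" and y: "y \<noteq> mag add y"
    and le_R: "le (relunc add mul x) (relunc add mul y)"
  shows "le (mul (mag add x) y) (mul (mag add y) x)"
proof -
  let ?Ry = "mag add (unity mul y)"
  have Rx: "relunc add mul x = mag add (unity mul x)"
    and Ry: "relunc add mul y = ?Ry"
    using x y unfolding relunc_def by simp_all
  have "le (mul x (relunc add mul x)) (mul x ?Ry)"
    using mul_left_mono_mag[OF x] le_R Rx Ry by simp
  then have "le (mag add x) (mag add (mul x ?Ry))"
    using mul_relunc[OF x] mul_mag_is_mag mul_commute by metis
  then have "le (mul y (mag add x)) (mul y (mul x ?Ry))"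
    using mul_left_mono_mag[OF y] mul_mag_is_mag mul_commute by metis
  moreover have "mul y (mul x ?Ry) = mul x (mag add y)"
    using mul_relunc[OF y] Ry mul_assoc mul_commute by metis
  ultimately show ?thesis
    using mul_commute by metis
qed

end

theorem mainTheorem9:
  fixes add mul :: "'a \<Rightarrow> 'a \<Rightarrow> 'a" and le :: "'a \<Rightarrow> 'a \<Rightarrow> bool" and x y :: 'a
  assumes "solid add mul le"
    and "x \<noteq> mag add x" and "y \<noteq> mag add y"
    and "le (relunc add mul x) (relunc add mul y)"
  shows "le (mul (mag add x) y) (mul (mag add y) x)"
proof -
  interpret solid_structure add mul le
    using assms(1) by (rule solid_structure.intro)
  show ?thesis
    using assms(2-4) by (rule mag_mul_le_of_relunc_le)
qed

end
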